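(* Let $n\ge1$, $\mathbf x\in[0,1]^n$, $n_1=|\{i:x_i\in[0,\tfrac12]\}|$, $n_2=|\{i:x_i\in(\tfrac12,1]\}|$, and let the Majority Vote mechanism output $y=0$ if $n_1\le n_2$ and $y=1$ otherwise. Then for every $1\le p<\infty$, $$\Big(\sum_i(1-|x_i-y|)^p\Big)^{1/p}\le(2^p+1)^{1/p}\min_{z\in[0,1]}\Big(\sum_i(1-|x_i-z|)^p\Big)^{1/p},$$ and $\max_i(1-|x_i-y|)\le 2\min_{z\in[0,1]}\max_i(1-|x_i-z|)$. That is, Majority Vote is a $(2^p+1)^{1/p}$-approximation for the $L_p$ social cost for $1\le p<\infty$ and a $2$-approximation for the $L_\infty$ social cost (maximum cost).
   Context: Obnoxious facility location on $[0,1]$: agent $i$ at $x_i$ incurs cost $c(x_i,y)=1-|x_i-y|$ from a facility at $y$. $L_p$ social cost: $\mathrm{sc}_p(y,\mathbf x)=(\sum_ic(x_i,y)^p)^{1/p}$, and $\mathrm{sc}_\infty(y,\mathbf x)=\max_ic(x_i,y)$; to be minimized. *)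

theory Defs
  imports "HOL-Analysis.Analysis"
begin

definition cost :: "real \<Rightarrow> real \<Rightarrow> real" where
  "cost xi y = 1 - \<bar>xi - y\<bar>"

definition sc_p :: "real \<Rightarrow> nat \<Rightarrow> (nat \<Rightarrow> real) \<Rightarrow> real \<Rightarrow> real" where
  "sc_p p n x y = (\<Sum>i<n. cost (x i) y powr p) powr (1 / p)"

definition sc_inf :: "nat \<Rightarrow> (nat \<Rightarrow> real) \<Rightarrow> real \<Rightarrow> real" where
  "sc_inf n x y = Max ((\<lambda>i. cost (x i) y) ` {..<n})"

definition majority_vote :: "nat \<Rightarrow> (nat \<Rightarrow> real) \<Rightarrow> real" where
  "majority_vote n x =
     (let n1 = card {i \<in> {..<n}. 0 \<le> x i \<and> x i \<le> 1/2};
          n2 = card {i \<in> {..<n}. 1/2 < x i \<and> x i \<le> 1}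
      in if n1 \<le> n2 then 0 else 1)"

end

theory Submission
  imports Defs
begin

text \<open>
  Fix a location z and let y be the output of Majority Vote. If z lies in the same half of
  [0,1] as y, every agent's cost at y is at most twice its cost at z. Otherwise the majority B
  of the agents lies in the half of z but not of y, so each of them has cost at most 1/2 at y
  and at least 1/2 at z, while the minority has cost at most 1 at y. Hence the p-th power sum
  of the costs at y is at most |B| 2^-p + |B| = (2^p + 1) |B| 2^-p, which is at most 2^p + 1
  times the p-th power sum at z; and the maximum cost at y is at most 1, which is at most
  twice the cost at z of any agent of B.
\<close>

lemma cost_nonneg: "x \<in> {0..1} \<Longrightarrow> y \<in> {0..1} \<Longrightarrow> 0 \<le> cost x y"
  unfolding cost_def by auto

lemma cost_le_one: "cost x y \<le> 1"
  unfolding cost_def by simp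

lemma cost_zero_le_double_cost:
  "x \<in> {0..1} \<Longrightarrow> z \<in> {0..1/2} \<Longrightarrow> cost x 0 \<le> 2 * cost x z"
  unfolding cost_def by (auto simp: abs_if)

lemma cost_one_le_double_cost:
  "x \<in> {0..1} \<Longrightarrow> z \<in> {1/2..1} \<Longrightarrow> cost x 1 \<le> 2 * cost x z"
  unfolding cost_def by (auto simp: abs_if)

lemma majority_vote_in_unit_interval: "majority_vote n x \<in> {0..1}"
  unfolding majority_vote_def Let_def by simp

lemma majority_vote_cases [consumes 2]:
  fixes x :: "nat \<Rightarrow> real"
  assumes x: "\<forall>i<n. x i \<in> {0..1}" and z: "z \<in> {0..1}"
  obtains (same_half) "\<forall>i<n. cost (x i) (majority_vote n x) \<le> 2 * cost (x i) z"
    | (opposite_half) B where "B \<subseteq> {..<n}" "card ({..<n} - B) \<le> card B"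
        "\<forall>i\<in>B. cost (x i) (majority_vote n x) \<le> 1/2 \<and> 1/2 \<le> cost (x i) z"
proof -
  define L where "L = {i \<in> {..<n}. 0 \<le> x i \<and> x i \<le> 1/2}"
  define R where "R = {i \<in> {..<n}. 1/2 < x i \<and> x i \<le> 1}"
  have complements: "{..<n} - R = L" "{..<n} - L = R"
    using x unfolding L_def R_def by force+
  show thesis
  proof (cases "card L \<le> card R")
    case True
    then have "majority_vote n x = 0"
      unfolding majority_vote_def L_def R_def Let_def by simp
    moreover have "z \<le> 1/2 \<or> (\<forall>i\<in>R. cost (x i) 0 \<le> 1/2 \<and> 1/2 \<le> cost (x i) z)"
      using z unfolding R_def cost_def by (auto simp: abs_if)
    ultimately show thesis
      using same_half opposite_half[of R] True complements x z cost_zero_le_double_cost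
      by (auto simp: R_def)
  next
    case False
    then have "majority_vote n x = 1"
      unfolding majority_vote_def L_def R_def Let_def by simp
    moreover have "1/2 \<le> z \<or> (\<forall>i\<in>L. cost (x i) 1 \<le> 1/2 \<and> 1/2 \<le> cost (x i) z)"
      using z unfolding L_def cost_def by (auto simp: abs_if)
    ultimately show thesis
      using same_half opposite_half[of L] False complements x z cost_one_le_double_cost
      by (auto simp: L_def)
  qed
qed

lemma sum_powr_le_if_le_double:
  fixes c c' :: "'a \<Rightarrow> real"
  assumes "0 \<le> p" and "\<And>i. i \<in> I \<Longrightarrow> 0 \<le> c i \<and> c i \<le> 2 * c' i"
  shows "(\<Sum>i\<in>I. c i powr p) \<le> 2 powr p * (\<Sum>i\<in>I. c' i powr p)"
proof -
  have "c i powr p \<le> 2 powr p * c' i powr p" if "i \<in> I" for i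
  proof -
    have "c i powr p \<le> (2 * c' i) powr p"
      using assms that by (intro powr_mono2) auto
    also have "\<dots> = 2 powr p * c' i powr p"
      using assms that by (simp add: powr_mult)
    finally show ?thesis .
  qed
  then show ?thesis
    by (simp add: sum_distrib_left sum_mono)
qed

lemma sum_powr_le_if_majority_halves:
  fixes c c' :: "'a \<Rightarrow> real"
  assumes "0 \<le> p" "finite I" "B \<subseteq> I" "card (I - B) \<le> card B"
    and unit: "\<And>i. i \<in> I \<Longrightarrow> 0 \<le> c i \<and> c i \<le> 1 \<and> 0 \<le> c' i"
    and halves: "\<And>i. i \<in> B \<Longrightarrow> c i \<le> 1/2 \<and> 1/2 \<le> c' i"
  shows "(\<Sum>i\<in>I. c i powr p) \<le> (2 powr p + 1) * (\<Sum>i\<in>I. c' i powr p)"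
proof -
  define h :: real where "h = (1/2) powr p"
  have "2 powr p * h = 1"
    unfolding h_def by (simp add: powr_mult[symmetric])
  have "finite B"
    using assms(2,3) finite_subset by blast
  have minority_c: "(\<Sum>i\<in>I - B. c i powr p) \<le> card (I - B)"
    using sum_mono[of "I - B" "\<lambda>i. c i powr p" "\<lambda>_. 1"] unit powr_mono2[OF assms(1)]
    by fastforce
  have "c i powr p \<le> h" if "i \<in> B" for i
    unfolding h_def using that unit halves assms(1,3) by (intro powr_mono2) auto
  then have majority_c: "(\<Sum>i\<in>B. c i powr p) \<le> card B * h"
    using sum_mono[of B "\<lambda>i. c i powr p" "\<lambda>_. h"] by simp
  have "h \<le> c' i powr p" if "i \<in> B" for i
    unfolding h_def using that halves assms(1) by (intro powr_mono2) auto
  then have majority_c': "card B * h \<le> (\<Sum>i\<in>B. c' i powr p)"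
    using sum_mono[of B "\<lambda>_. h" "\<lambda>i. c' i powr p"] by simp
  have "(\<Sum>i\<in>I. c i powr p) = (\<Sum>i\<in>B. c i powr p) + (\<Sum>i\<in>I - B. c i powr p)"
    using assms(2,3) by (metis sum.subset_diff add.commute)
  also have "\<dots> \<le> card B * h + card B * (2 powr p * h)"
    using majority_c minority_c assms(4) \<open>2 powr p * h = 1\<close> by simp
  also have "\<dots> = (2 powr p + 1) * (card B * h)"
    by (simp add: algebra_simps)
  also have "\<dots> \<le> (2 powr p + 1) * (\<Sum>i\<in>B. c' i powr p)"
    using majority_c' by (intro mult_left_mono) (auto intro: add_nonneg_nonneg)
  also have "\<dots> \<le> (2 powr p + 1) * (\<Sum>i\<in>I. c' i powr p)"
    using assms(2,3) unit by (intro mult_left_mono sum_mono2) auto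
  finally show ?thesis .
qed

lemma le_mult_INF:
  fixes a C :: real and g :: "'a \<Rightarrow> real"
  assumes "A \<noteq> {}" "0 < C" "\<And>z. z \<in> A \<Longrightarrow> a \<le> C * g z"
  shows "a \<le> C * (INF z\<in>A. g z)"
proof -
  have "a / C \<le> (INF z\<in>A. g z)"
    using assms by (intro cINF_greatest) (auto simp: divide_le_eq mult.commute)
  then show ?thesis
    using assms(2) by (simp add: divide_le_eq mult.commute)
qed

lemma sc_p_majority_vote_le:
  fixes x :: "nat \<Rightarrow> real"
  assumes "0 \<le> p" "\<forall>i<n. x i \<in> {0..1}" "z \<in> {0..1}"
  shows "sc_p p n x (majority_vote n x) \<le> (2 powr p + 1) powr (1 / p) * sc_p p n x z"
proof -
  let ?y = "majority_vote n x"
  have unit: "0 \<le> cost (x i) ?y \<and> cost (x i) ?y \<le> 1 \<and> 0 \<le> cost (x i) z" if "i < n" for i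
    using assms that majority_vote_in_unit_interval cost_nonneg cost_le_one by blast
  have sum_le: "(\<Sum>i<n. cost (x i) ?y powr p) \<le> (2 powr p + 1) * (\<Sum>i<n. cost (x i) z powr p)"
    using assms(2,3)
  proof (cases rule: majority_vote_cases)
    case same_half
    then have "(\<Sum>i<n. cost (x i) ?y powr p) \<le> 2 powr p * (\<Sum>i<n. cost (x i) z powr p)"
      using unit assms(1) by (intro sum_powr_le_if_le_double) auto
    also have "\<dots> \<le> (2 powr p + 1) * (\<Sum>i<n. cost (x i) z powr p)"
      by (intro mult_right_mono sum_nonneg) auto
    finally show ?thesis .
  next
    case (opposite_half B)
    then show ?thesis
      using unit assms(1) by (intro sum_powr_le_if_majority_halves) auto
  qed
  have "sc_p p n x ?y \<le> ((2 powr p + 1) * (\<Sum>i<n. cost (x i) z powr p)) powr (1 / p)"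
    unfolding sc_p_def using sum_le assms(1) by (intro powr_mono2) (auto simp: sum_nonneg)
  also have "\<dots> = (2 powr p + 1) powr (1 / p) * sc_p p n x z"
    unfolding sc_p_def by (rule powr_mult)
  finally show ?thesis .
qed

lemma sc_inf_majority_vote_le:
  fixes x :: "nat \<Rightarrow> real"
  assumes "n \<ge> 1" "\<forall>i<n. x i \<in> {0..1}" "z \<in> {0..1}"
  shows "sc_inf n x (majority_vote n x) \<le> 2 * sc_inf n x z"
proof -
  let ?y = "majority_vote n x"
  have nonempty: "(\<lambda>i. cost (x i) y) ` {..<n} \<noteq> {}" for y
    using assms(1) by (auto simp: lessThan_empty_iff)
  have cost_le_sc_inf: "cost (x i) y \<le> sc_inf n x y" if "i < n" for i y
    unfolding sc_inf_def using that by (intro Max_ge) auto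
  show ?thesis
    using assms(2,3)
  proof (cases rule: majority_vote_cases)
    case same_half
    then have "cost (x i) ?y \<le> 2 * sc_inf n x z" if "i < n" for i
      using that cost_le_sc_inf[of i z] by force
    then show ?thesis
      unfolding sc_inf_def[of n x ?y] using nonempty by (subst Max_le_iff) auto
  next
    case (opposite_half B)
    then have "B \<noteq> {}"
      using assms(1) by auto
    then obtain b where "b \<in> B" "b < n"
      using opposite_half(1) by blast
    then have "1 \<le> 2 * sc_inf n x z"
      using opposite_half(3) cost_le_sc_inf[of b z] by force
    moreover have "sc_inf n x ?y \<le> 1"
      unfolding sc_inf_def using nonempty by (subst Max_le_iff) (auto simp: cost_le_one)
    ultimately show ?thesis
      by linarith
  qed
qed

theorem theorem10:
  fixes n :: nat and x :: "nat \<Rightarrow> real"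
  assumes "n \<ge> 1"
    and "\<And>i. i < n \<Longrightarrow> x i \<in> {0..1}"
  shows "(\<forall>p::real. 1 \<le> p \<longrightarrow>
            sc_p p n x (majority_vote n x)
              \<le> (2 powr p + 1) powr (1 / p) * (INF z\<in>{0..1}. sc_p p n x z))
       \<and> sc_inf n x (majority_vote n x) \<le> 2 * (INF z\<in>{0..1}. sc_inf n x z)"
proof (intro conjI allI impI)
  fix p :: real
  assume "1 \<le> p"
  have "0 < (2::real) powr p + 1"
    using powr_ge_zero[of 2 p] by linarith
  with \<open>1 \<le> p\<close> show "sc_p p n x (majority_vote n x)
      \<le> (2 powr p + 1) powr (1 / p) * (INF z\<in>{0..1}. sc_p p n x z)"
    using assms(2) by (intro le_mult_INF sc_p_majority_vote_le) auto
next
  show "sc_inf n x (majority_vote n x) \<le> 2 * (INF z\<in>{0..1}. sc_inf n x z)"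
    using assms by (intro le_mult_INF sc_inf_majority_vote_le) auto
qed

end
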